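(* For all $n,m$ and every distribution $\mathcal{D}$ supported on $[0,1]$, plurality is an $\alpha$-expected-welfare-maximizing rule for $\mathcal{D}$ with $\alpha=\max(\frac1m,\frac1n)$: for every preference profile $\sigma$, any alternative $p$ ranked first by the largest number of voters satisfies $\mathbb{E}[\mathrm{sw}(p,u)]\ge\max(\frac1m,\frac1n)\max_{j\in A}\mathbb{E}[\mathrm{sw}(j,u)]$.
   Context: There are $n$ voters and $m$ alternatives $A=\{1,\dots,m\}$. A preference profile $\sigma$ consists of a ranking of $A$ for each voter. Given $\mathcal{D}$ and $\sigma$, a random utility profile $u$ consistent with $\sigma$ is generated as follows: independently for each voter $i$, draw $m$ i.i.d. samples from $\mathcal{D}$ and assign them, from highest to lowest, to the alternatives in the order of voter $i$'s ranking. The social welfare of $j$ is $\mathrm{sw}(j,u)=\sum_i u_{ij}$; expectations are over $u$. *)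

theory Defs
  imports "HOL-Probability.Probability"
begin

text \<open>Alternatives are 0,...,m-1, voters are 0,...,n-1.
  A preference profile is given by rank positions: r i j is the position
  (0 = top) of alternative j in voter i's ranking; each r i restricted to
  {0..<m} is a bijection onto {0..<m}.\<close>

definition is_profile :: "nat \<Rightarrow> nat \<Rightarrow> (nat \<Rightarrow> nat \<Rightarrow> nat) \<Rightarrow> bool" where
  "is_profile n m r \<longleftrightarrow> (\<forall>i<n. bij_betw (r i) {..<m} {..<m})"

definition sample_space :: "nat \<Rightarrow> nat \<Rightarrow> real measure \<Rightarrow> (nat \<times> nat \<Rightarrow> real) measure" where
  "sample_space n m D = PiM ({..<n} \<times> {..<m}) (\<lambda>_. D)"

definition util :: "nat \<Rightarrow> (nat \<Rightarrow> nat \<Rightarrow> nat) \<Rightarrow> (nat \<times> nat \<Rightarrow> real) \<Rightarrow> nat \<Rightarrow> nat \<Rightarrow> real" where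
  "util m r x i j = rev (sort (map (\<lambda>k. x (i, k)) [0..<m])) ! r i j"

definition sw :: "nat \<Rightarrow> nat \<Rightarrow> (nat \<Rightarrow> nat \<Rightarrow> nat) \<Rightarrow> (nat \<times> nat \<Rightarrow> real) \<Rightarrow> nat \<Rightarrow> real" where
  "sw n m r x j = (\<Sum>i<n. util m r x i j)"

definition exp_sw :: "nat \<Rightarrow> nat \<Rightarrow> real measure \<Rightarrow> (nat \<Rightarrow> nat \<Rightarrow> nat) \<Rightarrow> nat \<Rightarrow> real" where
  "exp_sw n m D r j = integral\<^sup>L (sample_space n m D) (\<lambda>x. sw n m r x j)"

definition plurality_score :: "nat \<Rightarrow> (nat \<Rightarrow> nat \<Rightarrow> nat) \<Rightarrow> nat \<Rightarrow> nat" where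
  "plurality_score n r j = card {i. i < n \<and> r i j = 0}"

end

theory Submission
  imports Defs
begin

text \<open>Let \<open>c\<close> be the expected maximum of \<open>m\<close> independent draws from \<open>D\<close>. The utilities
  of each voter are such draws, the largest one going to the top-ranked alternative, so each voter
  contributes between \<open>0\<close> and \<open>c\<close> to the expected welfare of any alternative and exactly
  \<open>c\<close> to that of the alternative it ranks first. Hence every alternative has expected welfare
  at most \<open>n c\<close>, while an alternative ranked first by \<open>s\<close> voters has expected welfare at
  least \<open>s c\<close>. As the \<open>m\<close> plurality scores sum to \<open>n\<close>, a plurality winner has
  \<open>s \<ge> n / m\<close>, and \<open>s \<ge> 1\<close> as \<open>n > 0\<close>.\<close>

lemma nth_insort_0: "insort a ys ! 0 = (case ys of [] \<Rightarrow> a | y # _ \<Rightarrow> min a y)"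
  by (cases ys) (auto simp: min_def)

lemma nth_insort_sorted:
  fixes a :: "'a::linorder"
  assumes "sorted ys" "0 < k" "k < length ys"
  shows "insort a ys ! k = max (ys ! (k - 1)) (min a (ys ! k))"
  using assms
proof (induction ys arbitrary: k)
  case (Cons y ys)
  have mono: "(y # ys) ! (k - 1) \<le> (y # ys) ! k" "y \<le> (y # ys) ! (k - 1)"
    using sorted_nth_mono[OF Cons.prems(1), of _ k] sorted_nth_mono[OF Cons.prems(1), of 0 "k - 1"]
      Cons.prems(3) by auto
  show ?case
  proof (cases "a \<le> y")
    case True
    then show ?thesis using mono Cons.prems by (auto simp: max_def min_def)
  next
    case False
    show ?thesis
    proof (cases "k = 1")
      case True
      then obtain z zs where "ys = z # zs" using Cons.prems(3) by (cases ys) auto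
      then show ?thesis using \<open>k = 1\<close> \<open>\<not> a \<le> y\<close> mono by (auto simp: max_def min_def)
    next
      case False
      then show ?thesis using Cons \<open>\<not> a \<le> y\<close> by simp
    qed
  qed
qed simp

lemma nth_insort_length:
  fixes a :: "'a::linorder"
  assumes "sorted ys" "ys \<noteq> []"
  shows "insort a ys ! length ys = max (last ys) a"
  using assms
proof (induction ys)
  case (Cons y ys)
  show ?case
  proof (cases "a \<le> y")
    case True
    have "insort a (y # ys) ! length (y # ys) = last (y # ys)"
      using True last_conv_nth[of "y # ys"] by simp
    moreover have "a \<le> last (y # ys)"
      using Cons.prems(1) True last_in_set[of "y # ys"] by (auto simp del: last.simps)
    ultimately show ?thesis by (simp only: max_absorb1)
  next
    case False
    then show ?thesis using Cons by (cases "ys = []") auto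
  qed
qed simp

lemma sort_Nil_iff: "sort xs = [] \<longleftrightarrow> xs = []"
  by (metis length_0_conv length_sort)

lemma borel_measurable_sort_nth:
  fixes fs :: "('a \<Rightarrow> 'b::{linorder_topology, second_countable_topology}) list"
  assumes "\<And>f. f \<in> set fs \<Longrightarrow> f \<in> borel_measurable M" "k < length fs"
  shows "(\<lambda>x. sort (map (\<lambda>f. f x) fs) ! k) \<in> borel_measurable M"
  using assms
proof (induction fs arbitrary: k)
  case (Cons f fs)
  define ys where "ys x = sort (map (\<lambda>f. f x) fs)" for x
  have f: "f \<in> borel_measurable M"
    and ys: "\<And>q. q < length fs \<Longrightarrow> (\<lambda>x. ys x ! q) \<in> borel_measurable M"
    using Cons by (auto simp: ys_def)
  have sort_Cons: "sort (map (\<lambda>f. f x) (f # fs)) = insort (f x) (ys x)" for x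
    by (simp add: ys_def)
  consider "k = 0" "fs = []" | "k = 0" "fs \<noteq> []" | "0 < k" "k < length fs" | "0 < k" "k = length fs"
    using Cons.prems(2) by fastforce
  then show ?case
  proof cases
    case 1
    then show ?thesis using f by (simp add: ys_def)
  next
    case 2
    then have "sort (map (\<lambda>f. f x) (f # fs)) ! k = min (f x) (ys x ! 0)" for x
      unfolding sort_Cons nth_insort_0 by (cases "ys x") (auto simp: ys_def sort_Nil_iff)
    then show ?thesis using 2 f ys by simp
  next
    case 3
    then show ?thesis using f ys by (simp add: sort_Cons nth_insort_sorted ys_def)
  next
    case 4
    then have "sort (map (\<lambda>f. f x) (f # fs)) ! k = max (ys x ! (length fs - 1)) (f x)" for x
      unfolding sort_Cons using nth_insort_length[of "ys x" "f x"]
      by (auto simp: ys_def last_conv_nth sort_Nil_iff)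
    then show ?thesis using 4 f ys by simp
  qed
qed simp

definition order_stat :: "nat \<Rightarrow> nat \<Rightarrow> (nat \<Rightarrow> real) \<Rightarrow> real" where
  "order_stat m q y = sort (map y [0..<m]) ! q"

lemma order_stat_eq_sample:
  assumes "q < m"
  obtains k where "k < m" "order_stat m q y = y k"
proof -
  have "order_stat m q y \<in> set (map y [0..<m])"
    using nth_mem[of q "sort (map y [0..<m])"] assms by (simp add: order_stat_def)
  then show ?thesis using that by auto
qed

lemma order_stat_le_max: "q < m \<Longrightarrow> order_stat m q y \<le> order_stat m (m - 1) y"
  unfolding order_stat_def by (intro sorted_nth_mono) auto

lemma borel_measurable_order_stat:
  assumes "sets M = sets borel" "q < m"
  shows "order_stat m q \<in> borel_measurable (PiM {..<m} (\<lambda>_. M))"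
proof -
  have "order_stat m q = (\<lambda>y. sort (map (\<lambda>f. f y) (map (\<lambda>k y. y k) [0..<m])) ! q)"
    by (simp add: order_stat_def fun_eq_iff comp_def)
  moreover have "(\<lambda>y. y k) \<in> borel_measurable (PiM {..<m} (\<lambda>_. M))" if "k < m" for k
    using measurable_component_singleton[of k "{..<m}" "\<lambda>_. M"] that
      measurable_cong_sets[OF refl assms(1), of "PiM {..<m} (\<lambda>_. M)"] by simp
  ultimately show ?thesis
    using assms(2) by (simp only:) (rule borel_measurable_sort_nth, auto)
qed

text \<open>Restricted to \<open>{..<m}\<close> so that it lies in the space of \<open>PiM {..<m}\<close>, whose elements
  are extensional functions.\<close>

definition voter_samples :: "nat \<Rightarrow> (nat \<times> nat \<Rightarrow> real) \<Rightarrow> nat \<Rightarrow> nat \<Rightarrow> real" where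
  "voter_samples m x i = (\<lambda>k\<in>{..<m}. x (i, k))"

lemma util_eq_order_stat:
  assumes "r i j < m"
  shows "util m r x i j = order_stat m (m - 1 - r i j) (voter_samples m x i)"
proof -
  have "map (voter_samples m x i) [0..<m] = map (\<lambda>k. x (i, k)) [0..<m]"
    by (rule map_cong) (auto simp: voter_samples_def)
  then show ?thesis
    using assms unfolding util_def order_stat_def by (simp only:) (simp add: rev_nth)
qed

lemma measurable_voter_samples:
  "i < n \<Longrightarrow>
    (\<lambda>x. voter_samples m x i) \<in> measurable (sample_space n m M) (PiM {..<m} (\<lambda>_. M))"
  unfolding sample_space_def voter_samples_def
  by (auto intro!: measurable_restrict measurable_component_singleton)

lemma distr_voter_samples:
  assumes "prob_space M" "i < n"
  shows "distr (sample_space n m M) (PiM {..<m} (\<lambda>_. M)) (\<lambda>x. voter_samples m x i)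
    = PiM {..<m} (\<lambda>_. M)"
  using distr_PiM_reindex[of "{..<n} \<times> {..<m}" "\<lambda>_. M" "\<lambda>k. (i, k)" "{..<m}"] assms
  unfolding sample_space_def voter_samples_def by (auto simp: inj_on_def)

lemma bij_betw_card_fiber:
  assumes "bij_betw f A B" "b \<in> B"
  shows "card {a \<in> A. f a = b} = 1"
proof -
  obtain a where "a \<in> A" "f a = b"
    using assms by (metis bij_betw_imp_surj_on imageE)
  then have "{a \<in> A. f a = b} = {a}"
    using assms(1) by (auto simp: bij_betw_def inj_on_def)
  then show ?thesis by simp
qed

lemma sum_plurality_score:
  assumes "is_profile n m r" "0 < m"
  shows "(\<Sum>j<m. plurality_score n r j) = n"
proof -
  have "(\<Sum>j<m. plurality_score n r j) = (\<Sum>j<m. \<Sum>i<n. if r i j = 0 then 1 else 0)"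
    unfolding plurality_score_def
    by (intro sum.cong refl) (simp add: sum.If_cases Int_def lessThan_def conj_commute)
  also have "\<dots> = (\<Sum>i<n. \<Sum>j<m. if r i j = 0 then 1 else 0)"
    by (rule sum.swap)
  also have "\<dots> = (\<Sum>i<n. 1)"
  proof (intro sum.cong refl)
    fix i assume "i \<in> {..<n}"
    then have "card {j \<in> {..<m}. r i j = 0} = 1"
      using assms unfolding is_profile_def by (intro bij_betw_card_fiber) auto
    then show "(\<Sum>j<m. if r i j = 0 then 1 else 0) = (1::nat)"
      by (simp add: sum.If_cases Int_def)
  qed
  finally show ?thesis by simp
qed

lemma plurality_winner_score_ge:
  assumes "0 < n" "is_profile n m r" "p < m"
    and "\<forall>j<m. plurality_score n r j \<le> plurality_score n r p"
  shows "max (1 / real m) (1 / real n) * real n \<le> real (plurality_score n r p)"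
proof -
  define s where "s = plurality_score n r p"
  have "n = (\<Sum>j<m. plurality_score n r j)"
    using sum_plurality_score assms(2,3) by simp
  also have "\<dots> \<le> (\<Sum>j<m. s)"
    using assms(4) unfolding s_def by (intro sum_mono) simp
  finally have "n \<le> m * s" by simp
  then have "real n / real m \<le> real s"
    using assms(3) by (simp add: divide_le_eq mult.commute flip: of_nat_mult)
  moreover have "real n / real n \<le> real s"
    using \<open>n \<le> m * s\<close> assms(1) by (cases s) auto
  ultimately show ?thesis
    by (simp add: max_def s_def)
qed

locale unit_interval_distribution = prob_space D for D :: "real measure" +
  assumes sets_eq_borel: "sets D = sets borel"
    and AE_unit_interval: "AE x in D. x \<in> {0..1}"
begin

definition expected_order_stat :: "nat \<Rightarrow> nat \<Rightarrow> real" where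
  "expected_order_stat m q = (\<integral>y. order_stat m q y \<partial>PiM {..<m} (\<lambda>_. D))"

lemma AE_order_stat_unit_interval:
  "AE y in PiM {..<m} (\<lambda>_. D). \<forall>q<m. order_stat m q y \<in> {0..1}"
proof -
  have "AE y in PiM {..<m} (\<lambda>_. D). \<forall>k\<in>{..<m}. y k \<in> {0..1}"
  proof (rule eventually_ball_finite)
    show "\<forall>k\<in>{..<m}. AE y in PiM {..<m} (\<lambda>_. D). y k \<in> {0..1}"
      using AE_PiM_component[of "{..<m}" "\<lambda>_. D", OF prob_space_axioms _ AE_unit_interval]
      by blast
  qed simp
  then show ?thesis
  proof eventually_elim
    case (elim y)
    show ?case
    proof (intro allI impI)
      fix q assume "q < m"
      then obtain k where "k < m" "order_stat m q y = y k" by (rule order_stat_eq_sample)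
      then show "order_stat m q y \<in> {0..1}" using elim by simp
    qed
  qed
qed

lemma integrable_order_stat:
  assumes "q < m"
  shows "integrable (PiM {..<m} (\<lambda>_. D)) (order_stat m q)"
proof -
  interpret Q: prob_space "PiM {..<m} (\<lambda>_. D)"
    by (intro prob_space_PiM prob_space_axioms)
  have "AE y in PiM {..<m} (\<lambda>_. D). norm (order_stat m q y) \<le> 1"
    using AE_order_stat_unit_interval[of m] by eventually_elim (use assms in auto)
  then show ?thesis
    by (rule Q.integrable_const_bound) (rule borel_measurable_order_stat[OF sets_eq_borel assms])
qed

lemma expected_order_stat_nonneg: "q < m \<Longrightarrow> 0 \<le> expected_order_stat m q"
  unfolding expected_order_stat_def using AE_order_stat_unit_interval[of m]
  by (intro integral_nonneg_AE) (auto elim!: eventually_mono)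

lemma expected_order_stat_le_max:
  "q < m \<Longrightarrow> expected_order_stat m q \<le> expected_order_stat m (m - 1)"
  unfolding expected_order_stat_def
  by (intro integral_mono integrable_order_stat order_stat_le_max) auto

lemma integrable_order_stat_voter_samples:
  "i < n \<Longrightarrow> q < m \<Longrightarrow>
    integrable (sample_space n m D) (\<lambda>x. order_stat m q (voter_samples m x i))"
proof -
  assume "i < n" "q < m"
  then have "integrable
      (distr (sample_space n m D) (PiM {..<m} (\<lambda>_. D)) (\<lambda>x. voter_samples m x i))
      (order_stat m q)"
    using integrable_order_stat distr_voter_samples[OF prob_space_axioms] by simp
  then show ?thesis
    by (rule integrable_distr[OF measurable_voter_samples[OF \<open>i < n\<close>]])
qed

lemma integral_order_stat_voter_samples:
  "i < n \<Longrightarrow> q < m \<Longrightarrow>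
    (\<integral>x. order_stat m q (voter_samples m x i) \<partial>sample_space n m D) = expected_order_stat m q"
  unfolding expected_order_stat_def
  using integral_distr[OF measurable_voter_samples borel_measurable_order_stat[OF sets_eq_borel]]
  by (simp add: distr_voter_samples prob_space_axioms)

lemma exp_sw_eq_sum_expected_order_stat:
  assumes "is_profile n m r" "j < m"
  shows "exp_sw n m D r j = (\<Sum>i<n. expected_order_stat m (m - 1 - r i j))"
proof -
  have r: "r i j < m" if "i < n" for i
    using assms that unfolding is_profile_def bij_betw_def by auto
  have "exp_sw n m D r j
      = (\<integral>x. (\<Sum>i<n. order_stat m (m - 1 - r i j) (voter_samples m x i)) \<partial>sample_space n m D)"
    unfolding exp_sw_def sw_def
    by (intro Bochner_Integration.integral_cong refl sum.cong) (simp add: util_eq_order_stat r)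
  also have "\<dots>
      = (\<Sum>i<n. \<integral>x. order_stat m (m - 1 - r i j) (voter_samples m x i) \<partial>sample_space n m D)"
    using assms(2) by (intro Bochner_Integration.integral_sum integrable_order_stat_voter_samples) auto
  also have "\<dots> = (\<Sum>i<n. expected_order_stat m (m - 1 - r i j))"
    using assms(2) by (intro sum.cong refl integral_order_stat_voter_samples) auto
  finally show ?thesis .
qed

lemma exp_sw_le_expected_max:
  assumes "is_profile n m r" "j < m"
  shows "exp_sw n m D r j \<le> n * expected_order_stat m (m - 1)"
proof -
  have "exp_sw n m D r j \<le> (\<Sum>i<n. expected_order_stat m (m - 1))"
    unfolding exp_sw_eq_sum_expected_order_stat[OF assms]
    using assms(2) by (intro sum_mono expected_order_stat_le_max) auto
  then show ?thesis by simp
qed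

lemma plurality_score_mult_expected_max_le_exp_sw:
  assumes "is_profile n m r" "j < m"
  shows "plurality_score n r j * expected_order_stat m (m - 1) \<le> exp_sw n m D r j"
proof -
  define S where "S = {i. i < n \<and> r i j = 0}"
  have "plurality_score n r j * expected_order_stat m (m - 1)
      = (\<Sum>i\<in>S. expected_order_stat m (m - 1 - r i j))"
    by (simp add: S_def plurality_score_def)
  also have "\<dots> \<le> (\<Sum>i<n. expected_order_stat m (m - 1 - r i j))"
    using assms(2) by (intro sum_mono2 expected_order_stat_nonneg) (auto simp: S_def)
  finally show ?thesis
    unfolding exp_sw_eq_sum_expected_order_stat[OF assms] .
qed

end

theorem theorem13:
  fixes n m :: nat and D :: "real measure" and r :: "nat \<Rightarrow> nat \<Rightarrow> nat" and p :: nat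
  assumes "0 < n"
    and "prob_space D" and "sets D = sets borel"
    and "AE x in D. x \<in> {0..1}"
    and "is_profile n m r"
    and "p < m"
    and "\<forall>j<m. plurality_score n r j \<le> plurality_score n r p"
  shows "exp_sw n m D r p \<ge>
           max (1 / real m) (1 / real n) * Max ((\<lambda>j. exp_sw n m D r j) ` {..<m})"
proof -
  interpret unit_interval_distribution D
    using assms(2-4)
    by (intro unit_interval_distribution.intro unit_interval_distribution_axioms.intro)
  define \<alpha> where "\<alpha> = max (1 / real m) (1 / real n)"
  define c where "c = expected_order_stat m (m - 1)"
  have "Max ((\<lambda>j. exp_sw n m D r j) ` {..<m}) \<le> n * c"
    using exp_sw_le_expected_max[OF assms(5)] assms(6) unfolding c_def by (subst Max_le_iff) auto
  then have "\<alpha> * Max ((\<lambda>j. exp_sw n m D r j) ` {..<m}) \<le> \<alpha> * n * c"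
    unfolding mult.assoc by (rule mult_left_mono) (simp add: \<alpha>_def le_max_iff_disj)
  also have "\<dots> \<le> plurality_score n r p * c"
  proof (rule mult_right_mono)
    show "\<alpha> * n \<le> plurality_score n r p"
      unfolding \<alpha>_def by (rule plurality_winner_score_ge[OF assms(1,5-7)])
    show "0 \<le> c"
      unfolding c_def using assms(6) by (intro expected_order_stat_nonneg) simp
  qed
  also have "\<dots> \<le> exp_sw n m D r p"
    unfolding c_def by (rule plurality_score_mult_expected_max_le_exp_sw[OF assms(5,6)])
  finally show ?thesis by (simp add: \<alpha>_def)
qed

end
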